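(* Let $G$ and $H$ be connected graphs. If $\mathcal{S}(G)$ is an independent set of $G$ and $\mu_t(G)=|\mathcal{S}(G)|$, then $$\mu_t(G\,\Box\,H)=\mu_t(G)\,\mu_t(H).$$
   Context: All graphs are finite, simple and undirected. The Cartesian product $G\,\Box\,H$ has vertex set $V(G)\times V(H)$, with $(x,y)$ adjacent to $(x',y')$ iff either $x=x'$ and $yy'\in E(H)$, or $xx'\in E(G)$ and $y=y'$. Let $F$ be a connected graph and $X\subseteq V(F)$. Two vertices $x,y\in V(F)$ are $X$-visible if there exists a shortest $x,y$-path in $F$ none of whose internal vertices belongs to $X$. $X$ is a total mutual-visibility set of $F$ if every two vertices of $F$ are $X$-visible (the empty set is allowed). $\mu_t(F)$ is the maximum cardinality of a total mutual-visibility set of $F$. A vertex is simplicial if its neighbors induce a complete graph; $\mathcal{S}(F)$ is the set of simplicial vertices of $F$. *)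

theory Defs
  imports Main
begin

definition graph :: "'a set \<Rightarrow> ('a \<Rightarrow> 'a \<Rightarrow> bool) \<Rightarrow> bool" where
  "graph V E \<longleftrightarrow> finite V \<and> (\<forall>x y. E x y \<longrightarrow> x \<in> V \<and> y \<in> V)
     \<and> (\<forall>x y. E x y \<longrightarrow> E y x) \<and> (\<forall>x. \<not> E x x)"

definition walk :: "'a set \<Rightarrow> ('a \<Rightarrow> 'a \<Rightarrow> bool) \<Rightarrow> 'a list \<Rightarrow> bool" where
  "walk V E p \<longleftrightarrow> p \<noteq> [] \<and> set p \<subseteq> V \<and>
     (\<forall>i. Suc i < length p \<longrightarrow> E (p ! i) (p ! Suc i))"

definition connected_graph :: "'a set \<Rightarrow> ('a \<Rightarrow> 'a \<Rightarrow> bool) \<Rightarrow> bool" where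
  "connected_graph V E \<longleftrightarrow> graph V E \<and> V \<noteq> {} \<and>
     (\<forall>x\<in>V. \<forall>y\<in>V. \<exists>p. walk V E p \<and> hd p = x \<and> last p = y)"

text \<open>Distance = number of edges of a shortest walk.\<close>
definition gdist :: "'a set \<Rightarrow> ('a \<Rightarrow> 'a \<Rightarrow> bool) \<Rightarrow> 'a \<Rightarrow> 'a \<Rightarrow> nat" where
  "gdist V E x y = (LEAST n. \<exists>p. walk V E p \<and> hd p = x \<and> last p = y \<and> length p = Suc n)"

definition shortest_path :: "'a set \<Rightarrow> ('a \<Rightarrow> 'a \<Rightarrow> bool) \<Rightarrow> 'a \<Rightarrow> 'a \<Rightarrow> 'a list \<Rightarrow> bool" where
  "shortest_path V E x y p \<longleftrightarrow> walk V E p \<and> hd p = x \<and> last p = y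
     \<and> length p = Suc (gdist V E x y)"

definition internal :: "'a list \<Rightarrow> 'a set" where
  "internal p = set (butlast (tl p))"

definition X_visible :: "'a set \<Rightarrow> ('a \<Rightarrow> 'a \<Rightarrow> bool) \<Rightarrow> 'a set \<Rightarrow> 'a \<Rightarrow> 'a \<Rightarrow> bool" where
  "X_visible V E X x y \<longleftrightarrow> (\<exists>p. shortest_path V E x y p \<and> internal p \<inter> X = {})"

definition total_mv_set :: "'a set \<Rightarrow> ('a \<Rightarrow> 'a \<Rightarrow> bool) \<Rightarrow> 'a set \<Rightarrow> bool" where
  "total_mv_set V E X \<longleftrightarrow> X \<subseteq> V \<and> (\<forall>x\<in>V. \<forall>y\<in>V. X_visible V E X x y)"

definition mu_t :: "'a set \<Rightarrow> ('a \<Rightarrow> 'a \<Rightarrow> bool) \<Rightarrow> nat" where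
  "mu_t V E = Max (card ` {X. total_mv_set V E X})"

definition simplicial :: "'a set \<Rightarrow> ('a \<Rightarrow> 'a \<Rightarrow> bool) \<Rightarrow> 'a \<Rightarrow> bool" where
  "simplicial V E v \<longleftrightarrow> v \<in> V \<and>
     (\<forall>x y. E v x \<and> E v y \<and> x \<noteq> y \<longrightarrow> E x y)"

definition simplicial_set :: "'a set \<Rightarrow> ('a \<Rightarrow> 'a \<Rightarrow> bool) \<Rightarrow> 'a set" where
  "simplicial_set V E = {v. simplicial V E v}"

definition independent_set :: "'a set \<Rightarrow> ('a \<Rightarrow> 'a \<Rightarrow> bool) \<Rightarrow> 'a set \<Rightarrow> bool" where
  "independent_set V E S \<longleftrightarrow> S \<subseteq> V \<and> (\<forall>x\<in>S. \<forall>y\<in>S. \<not> E x y)"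

definition cart_V :: "'a set \<Rightarrow> 'b set \<Rightarrow> ('a \<times> 'b) set" where
  "cart_V VG VH = VG \<times> VH"

definition cart_E :: "('a \<Rightarrow> 'a \<Rightarrow> bool) \<Rightarrow> ('b \<Rightarrow> 'b \<Rightarrow> bool)
    \<Rightarrow> 'a \<times> 'b \<Rightarrow> 'a \<times> 'b \<Rightarrow> bool" where
  "cart_E EG EH = (\<lambda>(x, y) (x', y'). (x = x' \<and> EH y y') \<or> (EG x x' \<and> y = y'))"

end

theory Submission imports Defs begin

text \<open>Simplicial vertices are never internal to a shortest path, so they can be added to any
total mutual-visibility set; the hypothesis on G therefore forces every total mutual-visibility set
of G to lie inside \<open>\<S>(G)\<close>. Distances in \<open>G \<box> H\<close> add up, hence a shortest path between two
vertices of a G-layer (H-layer) stays in that layer, and the fibres of a total mutual-visibility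
set Z of \<open>G \<box> H\<close> are total mutual-visibility sets of G and of H. So Z lies in \<open>\<S>(G) \<times> V(H)\<close>
with at most \<open>\<mu>\<^sub>t(H)\<close> points per H-layer. Conversely \<open>\<S>(G) \<times> Y\<close> is a total mutual-visibility
set for every such Y of H: two vertices in the same H-layer see each other inside it, and
otherwise a shortest path of G between the first coordinates passes through a non-simplicial
vertex u (as \<open>\<S>(G)\<close> is independent), in whose H-layer one runs along a shortest path of H.\<close>

lemma walk_not_Nil: "walk V E p \<Longrightarrow> p \<noteq> []"
  unfolding walk_def by auto

lemma walk_set_subset: "walk V E p \<Longrightarrow> set p \<subseteq> V"
  unfolding walk_def by auto

lemma walk_hd_in: "walk V E p \<Longrightarrow> hd p \<in> V"
  unfolding walk_def by auto

lemma walk_last_in: "walk V E p \<Longrightarrow> last p \<in> V"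
  unfolding walk_def by auto

lemma walk_singleton_iff [simp]: "walk V E [x] \<longleftrightarrow> x \<in> V"
  unfolding walk_def by auto

lemma walk_Cons_Cons_iff [simp]:
  "walk V E (x # y # p) \<longleftrightarrow> x \<in> V \<and> E x y \<and> walk V E (y # p)"
  unfolding walk_def by (auto simp: All_less_Suc2)

lemma walk_append_iff:
  assumes "xs \<noteq> []" "ys \<noteq> []"
  shows "walk V E (xs @ ys) \<longleftrightarrow> walk V E xs \<and> walk V E ys \<and> E (last xs) (hd ys)"
  using assms
proof (induction xs)
  case (Cons a xs)
  then show ?case by (cases xs; cases ys) auto
qed simp

lemma walk_map:
  assumes "walk V E p" "\<And>x. x \<in> V \<Longrightarrow> f x \<in> V'" "\<And>x y. E x y \<Longrightarrow> E' (f x) (f y)"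
  shows "walk V' E' (map f p)"
  using assms unfolding walk_def by auto

lemma gdist_le_length:
  assumes "walk V E p" "hd p = x" "last p = y"
  shows "gdist V E x y < length p"
proof -
  have "length p = Suc (length p - 1)" using walk_not_Nil[OF assms(1)] by simp
  then have "gdist V E x y \<le> length p - 1"
    unfolding gdist_def using assms by (intro Least_le) blast
  then show ?thesis using walk_not_Nil[OF assms(1)] by (cases p) auto
qed

lemma shortest_path_exists:
  assumes "walk V E p" "hd p = x" "last p = y"
  obtains q where "shortest_path V E x y q"
proof -
  have "\<exists>n q. walk V E q \<and> hd q = x \<and> last q = y \<and> length q = Suc n"
    using assms walk_not_Nil[OF assms(1)] by (intro exI[of _ "length p - 1"] exI[of _ p]) simp
  then have "\<exists>q. walk V E q \<and> hd q = x \<and> last q = y \<and> length q = Suc (gdist V E x y)"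
    unfolding gdist_def by (rule LeastI_ex)
  then show thesis using that unfolding shortest_path_def by blast
qed

lemma connected_graph_shortest_path_exists:
  assumes "connected_graph V E" "x \<in> V" "y \<in> V"
  obtains p where "shortest_path V E x y p"
  using assms shortest_path_exists unfolding connected_graph_def by metis

lemma shortest_path_length_le:
  assumes "shortest_path V E x y p" "walk V E q" "hd q = x" "last q = y"
  shows "length p \<le> length q"
  using gdist_le_length[OF assms(2-4)] assms(1) unfolding shortest_path_def by simp

lemma gdist_self: "x \<in> V \<Longrightarrow> gdist V E x x = 0"
  using gdist_le_length[of V E "[x]" x x] by simp

subsection \<open>Simplicial vertices\<close>

lemma shortest_path_no_shortcut:
  assumes sp: "shortest_path V E x y (xs @ v # b # ys)" and "xs \<noteq> []"
  shows "last xs \<noteq> b \<and> \<not> E (last xs) b"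
proof -
  let ?p = "xs @ v # b # ys"
  have w: "walk V E ?p" and hd_p: "hd ?p = x" and last_p: "last ?p = y"
    using sp unfolding shortest_path_def by auto
  have wxs: "walk V E xs" and wb: "walk V E (b # ys)"
    using w walk_append_iff[OF \<open>xs \<noteq> []\<close>, of "v # b # ys"] by auto
  have hd_q: "hd (xs @ zs) = x" for zs using hd_p \<open>xs \<noteq> []\<close> by simp
  have "last xs \<noteq> b"
  proof
    assume eq: "last xs = b"
    have "walk V E (xs @ ys)"
      using wxs wb eq walk_append_iff[OF \<open>xs \<noteq> []\<close>, of ys] by (cases ys) auto
    moreover have "last (xs @ ys) = y" using last_p eq by (cases ys) auto
    ultimately have "length ?p \<le> length (xs @ ys)"
      using shortest_path_length_le[OF sp] hd_q by blast
    then show False by simp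
  qed
  moreover have "\<not> E (last xs) b"
  proof
    assume "E (last xs) b"
    then have "walk V E (xs @ b # ys)" using wxs wb walk_append_iff[OF \<open>xs \<noteq> []\<close>] by simp
    moreover have "last (xs @ b # ys) = y" using last_p by simp
    ultimately have "length ?p \<le> length (xs @ b # ys)"
      using shortest_path_length_le[OF sp] hd_q by blast
    then show False by simp
  qed
  ultimately show ?thesis by blast
qed

lemma internal_decomp:
  assumes "v \<in> internal p"
  obtains xs b ys where "p = xs @ v # b # ys" "xs \<noteq> []"
proof -
  obtain us ts where "butlast (tl p) = us @ v # ts"
    using assms split_list unfolding internal_def by metis
  moreover have "tl p \<noteq> []" using assms unfolding internal_def by auto
  ultimately have "p = (hd p # us) @ v # hd (ts @ [last (tl p)]) # tl (ts @ [last (tl p)])"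
    by (metis append_butlast_last_id append_is_Nil_conv append.assoc append_Cons list.collapse
        list.sel(2) not_Cons_self2)
  then show thesis using that by blast
qed

lemma internal_shortest_path_not_simplicial:
  assumes "graph V E" "shortest_path V E x y p" "v \<in> internal p"
  shows "\<not> simplicial V E v"
proof
  assume simp_v: "simplicial V E v"
  obtain xs b ys where p: "p = xs @ v # b # ys" and "xs \<noteq> []"
    using internal_decomp[OF assms(3)] .
  have "walk V E (xs @ v # b # ys)" using assms(2) p unfolding shortest_path_def by simp
  then have "E (last xs) v" "E v b"
    using walk_append_iff[OF \<open>xs \<noteq> []\<close>, of "v # b # ys"] by auto
  then have "E v (last xs)" "E v b" using assms(1) unfolding graph_def by blast+
  moreover have "last xs \<noteq> b" "\<not> E (last xs) b"
    using shortest_path_no_shortcut[of V E x y xs v b ys] assms(2) p \<open>xs \<noteq> []\<close> by auto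
  ultimately show False using simp_v unfolding simplicial_def by blast
qed

lemma total_mv_set_union_simplicial:
  assumes "graph V E" "total_mv_set V E X"
  shows "total_mv_set V E (X \<union> simplicial_set V E)"
  unfolding total_mv_set_def
proof (intro conjI ballI)
  show "X \<union> simplicial_set V E \<subseteq> V"
    using assms(2) unfolding total_mv_set_def simplicial_set_def simplicial_def by auto
  fix x y assume "x \<in> V" "y \<in> V"
  then obtain p where sp: "shortest_path V E x y p" and "internal p \<inter> X = {}"
    using assms(2) unfolding total_mv_set_def X_visible_def by blast
  moreover have "internal p \<inter> simplicial_set V E = {}"
    using internal_shortest_path_not_simplicial[OF assms(1) sp] unfolding simplicial_set_def by blast
  ultimately show "X_visible V E (X \<union> simplicial_set V E) x y" unfolding X_visible_def by blast
qed

lemma finite_card_total_mv_sets: "finite V \<Longrightarrow> finite (card ` {X. total_mv_set V E X})"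
  by (rule finite_imageI, rule finite_subset[of _ "Pow V"]) (auto simp: total_mv_set_def)

lemma card_le_mu_t: "finite V \<Longrightarrow> total_mv_set V E X \<Longrightarrow> card X \<le> mu_t V E"
  unfolding mu_t_def by (intro Max_ge finite_card_total_mv_sets) auto

lemma mu_t_attained:
  assumes "finite V" "total_mv_set V E X\<^sub>0"
  obtains X where "total_mv_set V E X" "card X = mu_t V E"
proof -
  have "mu_t V E \<in> card ` {X. total_mv_set V E X}"
    unfolding mu_t_def using assms by (intro Max_in finite_card_total_mv_sets) auto
  then obtain X where "total_mv_set V E X" "mu_t V E = card X" by blast
  then show thesis using that by simp
qed

lemma total_mv_set_empty: "connected_graph V E \<Longrightarrow> total_mv_set V E {}"
  unfolding total_mv_set_def X_visible_def by (metis connected_graph_shortest_path_exists empty_subsetI inf_bot_right)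

lemma total_mv_set_subset_simplicial:
  assumes "connected_graph V E" "total_mv_set V E X"
    and mu: "mu_t V E = card (simplicial_set V E)"
  shows "X \<subseteq> simplicial_set V E"
proof -
  let ?S = "simplicial_set V E"
  have "graph V E" "finite V" using assms(1) unfolding connected_graph_def graph_def by auto
  then have tmv: "total_mv_set V E (X \<union> ?S)"
    using total_mv_set_union_simplicial assms(2) by blast
  then have "card (X \<union> ?S) \<le> card ?S" using card_le_mu_t[OF \<open>finite V\<close> tmv] mu by simp
  moreover have "finite (X \<union> ?S)"
    using tmv \<open>finite V\<close> finite_subset unfolding total_mv_set_def by blast
  ultimately have "X \<union> ?S = ?S" by (metis card_seteq sup_ge2)
  then show ?thesis by blast
qed

subsection \<open>Walks and distances in the Cartesian product\<close>

lemma cart_E_iff [simp]: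
  "cart_E EG EH (a, b) (c, d) \<longleftrightarrow> (a = c \<and> EH b d) \<or> (EG a c \<and> b = d)"
  by (simp add: cart_E_def)

lemma cart_V_iff [simp]: "(a, b) \<in> cart_V VG VH \<longleftrightarrow> a \<in> VG \<and> b \<in> VH"
  by (simp add: cart_V_def)

lemma internal_map: "internal (map f p) = f ` internal p"
  unfolding internal_def by (simp add: map_butlast[symmetric] map_tl[symmetric])

lemma internal_append3_subset:
  "internal (xs @ ys @ zs) \<subseteq> set (tl xs) \<union> set ys \<union> set (butlast zs)"
  unfolding internal_def
  by (cases xs; cases ys; cases zs) (auto simp: butlast_append dest: in_set_butlastD)

definition cart_route :: "'a list \<Rightarrow> 'a \<Rightarrow> 'a list \<Rightarrow> 'b list \<Rightarrow> ('a \<times> 'b) list" where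
  "cart_route P1 u P2 Q = map (\<lambda>a. (a, hd Q)) P1 @ map (\<lambda>b. (u, b)) Q @ map (\<lambda>a. (a, last Q)) P2"

lemma hd_cart_route: "Q \<noteq> [] \<Longrightarrow> hd (cart_route P1 u P2 Q) = (hd (P1 @ u # P2), hd Q)"
  unfolding cart_route_def by (cases P1) (auto simp: hd_map)

lemma last_cart_route: "Q \<noteq> [] \<Longrightarrow> last (cart_route P1 u P2 Q) = (last (P1 @ u # P2), last Q)"
  unfolding cart_route_def by (cases "P2 = []") (auto simp: last_map)

lemma length_cart_route: "length (cart_route P1 u P2 Q) = length P1 + length Q + length P2"
  unfolding cart_route_def by simp

lemma internal_cart_route:
  "fst ` internal (cart_route P1 u P2 Q) \<subseteq> set (tl P1) \<union> {u} \<union> set (butlast P2)"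
  using internal_append3_subset[of "map (\<lambda>a. (a, hd Q)) P1" "map (\<lambda>b. (u, b)) Q"]
  unfolding cart_route_def by (force simp: map_tl[symmetric] map_butlast[symmetric])

lemma walk_cart_route:
  assumes wP: "walk VG EG (P1 @ u # P2)" and wQ: "walk VH EH Q"
  shows "walk (cart_V VG VH) (cart_E EG EH) (cart_route P1 u P2 Q)"
proof -
  have "Q \<noteq> []" using walk_not_Nil[OF wQ] .
  then have VQ: "hd Q \<in> VH" "last Q \<in> VH" using walk_set_subset[OF wQ] by auto
  have lift: "walk (cart_V VG VH) (cart_E EG EH) (map (\<lambda>a. (a, b)) P)"
    if "walk VG EG P" "b \<in> VH" for P b
    by (rule walk_map[OF that(1)]) (use that(2) in auto)
  have "walk VG EG (u # P2)"
    using wP walk_append_iff[of P1 "u # P2"] by (cases "P1 = []") auto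
  then have uV: "u \<in> VG" using walk_set_subset by fastforce
  have wQu: "walk (cart_V VG VH) (cart_E EG EH) (map (\<lambda>b. (u, b)) Q)"
    by (rule walk_map[OF wQ]) (use uV in auto)
  have wQP2: "walk (cart_V VG VH) (cart_E EG EH) (map (\<lambda>b. (u, b)) Q @ map (\<lambda>a. (a, last Q)) P2)"
  proof (cases P2)
    case (Cons c P2')
    then have "walk VG EG P2" "EG u c" using \<open>walk VG EG (u # P2)\<close> by auto
    moreover have "walk (cart_V VG VH) (cart_E EG EH) (map (\<lambda>a. (a, last Q)) P2)"
      using lift \<open>walk VG EG P2\<close> VQ by blast
    ultimately show ?thesis using wQu Cons \<open>Q \<noteq> []\<close> by (simp add: walk_append_iff last_map)
  qed (use wQu in simp)
  show ?thesis
  proof (cases "P1 = []")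
    case False
    then have "walk VG EG P1" "EG (last P1) u" using wP walk_append_iff[OF False, of "u # P2"] by auto
    moreover have "walk (cart_V VG VH) (cart_E EG EH) (map (\<lambda>a. (a, hd Q)) P1)"
      using lift \<open>walk VG EG P1\<close> VQ by blast
    ultimately show ?thesis using wQP2 \<open>Q \<noteq> []\<close> False unfolding cart_route_def
      by (simp add: walk_append_iff hd_map last_map)
  qed (use wQP2 in \<open>simp add: cart_route_def\<close>)
qed

text \<open>pg and ph are the projections of p with consecutive repetitions removed; each edge of the
  product moves exactly one coordinate, whence the length identity.\<close>

lemma walk_cart_projections:
  assumes "walk (cart_V VG VH) (cart_E EG EH) p"
  shows "\<exists>pg ph. walk VG EG pg \<and> walk VH EH ph
    \<and> hd pg = fst (hd p) \<and> last pg = fst (last p) \<and> hd ph = snd (hd p) \<and> last ph = snd (last p)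
    \<and> length pg + length ph = Suc (length p) \<and> set pg = fst ` set p \<and> set ph = snd ` set p"
  using assms
proof (induction p rule: induct_list012)
  case 1
  then show ?case by (simp add: walk_def)
next
  case (2 x)
  then show ?case by (intro exI[of _ "[fst x]"] exI[of _ "[snd x]"]) (cases x, auto)
next
  case (3 x y zs)
  obtain a b c d where xy: "x = (a, b)" "y = (c, d)" by fastforce
  have "a \<in> VG" "b \<in> VH" "cart_E EG EH x y" "walk (cart_V VG VH) (cart_E EG EH) (y # zs)"
    using "3.prems" xy by auto
  moreover obtain pg ph where IH: "walk VG EG pg" "walk VH EH ph"
    "hd pg = c" "last pg = fst (last (y # zs))" "hd ph = d" "last ph = snd (last (y # zs))"
    "length pg + length ph = Suc (length (y # zs))"
    "set pg = fst ` set (y # zs)" "set ph = snd ` set (y # zs)"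
    using "3.IH"(2) calculation(4) xy by auto
  moreover obtain g pg' h ph' where "pg = g # pg'" "ph = h # ph'"
    using walk_not_Nil IH(1,2) by (metis list.exhaust)
  ultimately consider "a = c" "EH b d" | "EG a c" "b = d" using xy by auto
  then show ?case
  proof cases
    case 1
    then show ?thesis using IH xy \<open>b \<in> VH\<close> \<open>ph = h # ph'\<close>
      by (intro exI[of _ pg] exI[of _ "b # ph"]) auto
  next
    case 2
    then show ?thesis using IH xy \<open>a \<in> VG\<close> \<open>pg = g # pg'\<close>
      by (intro exI[of _ "a # pg"] exI[of _ ph]) auto
  qed
qed

lemma gdist_cart:
  assumes "connected_graph VG EG" "connected_graph VH EH"
    and "g \<in> VG" "g' \<in> VG" "h \<in> VH" "h' \<in> VH"
  shows "gdist (cart_V VG VH) (cart_E EG EH) (g, h) (g', h') = gdist VG EG g g' + gdist VH EH h h'"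
proof -
  obtain P where "shortest_path VG EG g g' P"
    using connected_graph_shortest_path_exists[OF assms(1,3,4)] .
  then have P: "walk VG EG P" "hd P = g" "last P = g'" "length P = Suc (gdist VG EG g g')"
    unfolding shortest_path_def by auto
  obtain Q where "shortest_path VH EH h h' Q"
    using connected_graph_shortest_path_exists[OF assms(2,5,6)] .
  then have Q: "walk VH EH Q" "hd Q = h" "last Q = h'" "length Q = Suc (gdist VH EH h h')"
    unfolding shortest_path_def by auto
  have "Q \<noteq> []" using walk_not_Nil[OF Q(1)] .
  have P_eq: "[] @ g # tl P = P" using walk_not_Nil[OF P(1)] P(2) by (cases P) auto
  define R where "R = cart_route [] g (tl P) Q"
  have wR: "walk (cart_V VG VH) (cart_E EG EH) R"
    unfolding R_def by (rule walk_cart_route) (use P_eq P(1) Q(1) in auto)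
  have ends: "hd R = (g, h)" "last R = (g', h')"
    unfolding R_def hd_cart_route[OF \<open>Q \<noteq> []\<close>] last_cart_route[OF \<open>Q \<noteq> []\<close>] P_eq
    using P Q by auto
  have "length R = Suc (gdist VG EG g g' + gdist VH EH h h')"
    unfolding R_def length_cart_route using P(4) Q(4) by simp
  then have le: "gdist (cart_V VG VH) (cart_E EG EH) (g, h) (g', h') \<le> gdist VG EG g g' + gdist VH EH h h'"
    using gdist_le_length[OF wR ends] by simp
  obtain p where "shortest_path (cart_V VG VH) (cart_E EG EH) (g, h) (g', h') p"
    using shortest_path_exists[OF wR ends] .
  then have wp: "walk (cart_V VG VH) (cart_E EG EH) p" "hd p = (g, h)" "last p = (g', h')"
    and len_p: "length p = Suc (gdist (cart_V VG VH) (cart_E EG EH) (g, h) (g', h'))"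
    unfolding shortest_path_def by auto
  obtain pg ph where "walk VG EG pg" "walk VH EH ph" "hd pg = g" "last pg = g'"
    "hd ph = h" "last ph = h'" and len: "length pg + length ph = Suc (length p)"
    using walk_cart_projections[OF wp(1)] wp(2,3) by auto
  then have "gdist VG EG g g' < length pg" "gdist VH EH h h' < length ph"
    by (simp_all add: gdist_le_length)
  with le len len_p show ?thesis by simp
qed

lemma shortest_path_cart_route:
  assumes "connected_graph VG EG" "connected_graph VH EH"
    and P: "shortest_path VG EG g g' (P1 @ u # P2)" and Q: "shortest_path VH EH h h' Q"
  shows "shortest_path (cart_V VG VH) (cart_E EG EH) (g, h) (g', h') (cart_route P1 u P2 Q)"
proof -
  have wP: "walk VG EG (P1 @ u # P2)" and wQ: "walk VH EH Q" using P Q unfolding shortest_path_def by auto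
  then have "g \<in> VG" "g' \<in> VG" "h \<in> VH" "h' \<in> VH"
    using P Q walk_hd_in[OF wP] walk_last_in[OF wP] walk_hd_in[OF wQ] walk_last_in[OF wQ]
    unfolding shortest_path_def by auto
  then have "gdist (cart_V VG VH) (cart_E EG EH) (g, h) (g', h') = gdist VG EG g g' + gdist VH EH h h'"
    using gdist_cart[OF assms(1,2)] by simp
  moreover have "Q \<noteq> []" using walk_not_Nil[OF wQ] .
  ultimately show ?thesis
    using walk_cart_route[OF wP wQ] P Q
    unfolding shortest_path_def hd_cart_route[OF \<open>Q \<noteq> []\<close>] last_cart_route[OF \<open>Q \<noteq> []\<close>]
      length_cart_route by simp
qed

lemma walk_map_fst_if_snd_const:
  assumes "graph VH EH" "walk (cart_V VG VH) (cart_E EG EH) p" "snd ` set p = {h}"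
  shows "walk VG EG (map fst p)"
  unfolding walk_def
proof (intro conjI allI impI)
  show "map fst p \<noteq> []" using walk_not_Nil[OF assms(2)] by simp
  show "set (map fst p) \<subseteq> VG" using walk_set_subset[OF assms(2)] by (auto simp: cart_V_def)
  fix i assume i: "Suc i < length (map fst p)"
  have "cart_E EG EH (p ! i) (p ! Suc i)" using assms(2) i unfolding walk_def by simp
  moreover have "p ! i \<in> set p" "p ! Suc i \<in> set p" using i by simp_all
  then have "snd (p ! i) = h" "snd (p ! Suc i) = h" using assms(3) by blast+
  moreover have "\<not> EH h h" using assms(1) unfolding graph_def by blast
  ultimately show "EG (map fst p ! i) (map fst p ! Suc i)"
    using i by (cases "p ! i"; cases "p ! Suc i") auto
qed

lemma walk_map_snd_if_fst_const:
  assumes "graph VG EG" "walk (cart_V VG VH) (cart_E EG EH) p" "fst ` set p = {g}"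
  shows "walk VH EH (map snd p)"
  unfolding walk_def
proof (intro conjI allI impI)
  show "map snd p \<noteq> []" using walk_not_Nil[OF assms(2)] by simp
  show "set (map snd p) \<subseteq> VH" using walk_set_subset[OF assms(2)] by (auto simp: cart_V_def)
  fix i assume i: "Suc i < length (map snd p)"
  have "cart_E EG EH (p ! i) (p ! Suc i)" using assms(2) i unfolding walk_def by simp
  moreover have "p ! i \<in> set p" "p ! Suc i \<in> set p" using i by simp_all
  then have "fst (p ! i) = g" "fst (p ! Suc i) = g" using assms(3) by blast+
  moreover have "\<not> EG g g" using assms(1) unfolding graph_def by blast
  ultimately show "EH (map snd p ! i) (map snd p ! Suc i)"
    using i by (cases "p ! i"; cases "p ! Suc i") auto
qed

lemma shortest_path_cart_G_layer:
  assumes cG: "connected_graph VG EG" and cH: "connected_graph VH EH"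
    and sp: "shortest_path (cart_V VG VH) (cart_E EG EH) (x, h) (y, h) p"
  shows "shortest_path VG EG x y (map fst p) \<and> p = map (\<lambda>a. (a, h)) (map fst p)"
proof -
  have wp: "walk (cart_V VG VH) (cart_E EG EH) p" and ends: "hd p = (x, h)" "last p = (y, h)"
    and len_p: "length p = Suc (gdist (cart_V VG VH) (cart_E EG EH) (x, h) (y, h))"
    using sp unfolding shortest_path_def by auto
  have "(x, h) \<in> cart_V VG VH" "(y, h) \<in> cart_V VG VH"
    using walk_hd_in[OF wp] walk_last_in[OF wp] ends by simp_all
  then have "length p = Suc (gdist VG EG x y)"
    using len_p gdist_cart[OF cG cH] gdist_self[of h VH EH] by simp
  obtain pg ph where "walk VG EG pg" "walk VH EH ph" "hd pg = x" "last pg = y" "hd ph = h"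
    and len: "length pg + length ph = Suc (length p)" and set_ph: "set ph = snd ` set p"
    using walk_cart_projections[OF wp] ends by auto
  then have "gdist VG EG x y < length pg" "ph \<noteq> []" by (simp_all add: gdist_le_length walk_not_Nil)
  then have "length ph \<le> 1" using len \<open>length p = Suc (gdist VG EG x y)\<close> by linarith
  then have "ph = [h]" using \<open>ph \<noteq> []\<close> \<open>hd ph = h\<close> by (cases ph) auto
  then have "snd ` set p = {h}" using set_ph by simp
  then have "walk VG EG (map fst p)"
    using walk_map_fst_if_snd_const[OF _ wp] cH unfolding connected_graph_def by blast
  moreover have "map (\<lambda>a. (a, h)) (map fst p) = p"
    unfolding map_map using \<open>snd ` set p = {h}\<close> by (intro map_idI) force
  ultimately show ?thesis
    using ends \<open>length p = Suc (gdist VG EG x y)\<close> walk_not_Nil[OF wp]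
    unfolding shortest_path_def by (simp add: hd_map last_map)
qed

lemma shortest_path_cart_H_layer:
  assumes cG: "connected_graph VG EG" and cH: "connected_graph VH EH"
    and sp: "shortest_path (cart_V VG VH) (cart_E EG EH) (g, x) (g, y) p"
  shows "shortest_path VH EH x y (map snd p) \<and> p = map (\<lambda>b. (g, b)) (map snd p)"
proof -
  have wp: "walk (cart_V VG VH) (cart_E EG EH) p" and ends: "hd p = (g, x)" "last p = (g, y)"
    and len_p: "length p = Suc (gdist (cart_V VG VH) (cart_E EG EH) (g, x) (g, y))"
    using sp unfolding shortest_path_def by auto
  have "(g, x) \<in> cart_V VG VH" "(g, y) \<in> cart_V VG VH"
    using walk_hd_in[OF wp] walk_last_in[OF wp] ends by simp_all
  then have "length p = Suc (gdist VH EH x y)"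
    using len_p gdist_cart[OF cG cH] gdist_self[of g VG EG] by simp
  obtain pg ph where "walk VG EG pg" "walk VH EH ph" "hd ph = x" "last ph = y" "hd pg = g"
    and len: "length pg + length ph = Suc (length p)" and set_pg: "set pg = fst ` set p"
    using walk_cart_projections[OF wp] ends by auto
  then have "gdist VH EH x y < length ph" "pg \<noteq> []" by (simp_all add: gdist_le_length walk_not_Nil)
  then have "length pg \<le> 1" using len \<open>length p = Suc (gdist VH EH x y)\<close> by linarith
  then have "pg = [g]" using \<open>pg \<noteq> []\<close> \<open>hd pg = g\<close> by (cases pg) auto
  then have "fst ` set p = {g}" using set_pg by simp
  then have "walk VH EH (map snd p)"
    using walk_map_snd_if_fst_const[OF _ wp] cG unfolding connected_graph_def by blast
  moreover have "map (\<lambda>b. (g, b)) (map snd p) = p"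
    unfolding map_map using \<open>fst ` set p = {g}\<close> by (intro map_idI) force
  ultimately show ?thesis
    using ends \<open>length p = Suc (gdist VH EH x y)\<close> walk_not_Nil[OF wp]
    unfolding shortest_path_def by (simp add: hd_map last_map)
qed

subsection \<open>Total mutual-visibility sets of the product\<close>

lemma total_mv_set_cart_G_fibre:
  assumes cG: "connected_graph VG EG" and cH: "connected_graph VH EH"
    and Z: "total_mv_set (cart_V VG VH) (cart_E EG EH) Z" and "h \<in> VH"
  shows "total_mv_set VG EG {g. (g, h) \<in> Z}"
  unfolding total_mv_set_def
proof (intro conjI ballI)
  show "{g. (g, h) \<in> Z} \<subseteq> VG" using Z unfolding total_mv_set_def cart_V_def by auto
  fix x y assume "x \<in> VG" "y \<in> VG"
  then have "X_visible (cart_V VG VH) (cart_E EG EH) Z (x, h) (y, h)"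
    using Z \<open>h \<in> VH\<close> unfolding total_mv_set_def by simp
  then obtain p where sp: "shortest_path (cart_V VG VH) (cart_E EG EH) (x, h) (y, h) p"
    and "internal p \<inter> Z = {}" unfolding X_visible_def by blast
  moreover note layer = shortest_path_cart_G_layer[OF cG cH sp]
  then have "internal p = (\<lambda>a. (a, h)) ` internal (map fst p)" by (metis internal_map)
  ultimately show "X_visible VG EG {g. (g, h) \<in> Z} x y"
    using layer unfolding X_visible_def by blast
qed

lemma total_mv_set_cart_H_fibre:
  assumes cG: "connected_graph VG EG" and cH: "connected_graph VH EH"
    and Z: "total_mv_set (cart_V VG VH) (cart_E EG EH) Z" and "g \<in> VG"
  shows "total_mv_set VH EH {h. (g, h) \<in> Z}"
  unfolding total_mv_set_def
proof (intro conjI ballI)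
  show "{h. (g, h) \<in> Z} \<subseteq> VH" using Z unfolding total_mv_set_def cart_V_def by auto
  fix x y assume "x \<in> VH" "y \<in> VH"
  then have "X_visible (cart_V VG VH) (cart_E EG EH) Z (g, x) (g, y)"
    using Z \<open>g \<in> VG\<close> unfolding total_mv_set_def by simp
  then obtain p where sp: "shortest_path (cart_V VG VH) (cart_E EG EH) (g, x) (g, y) p"
    and "internal p \<inter> Z = {}" unfolding X_visible_def by blast
  moreover note layer = shortest_path_cart_H_layer[OF cG cH sp]
  then have "internal p = (\<lambda>b. (g, b)) ` internal (map snd p)" by (metis internal_map)
  ultimately show "X_visible VH EH {h. (g, h) \<in> Z} x y"
    using layer unfolding X_visible_def by blast
qed

lemma card_total_mv_set_cart_le:
  assumes cG: "connected_graph VG EG" and cH: "connected_graph VH EH"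
    and "A \<subseteq> VG" and A: "\<And>X. total_mv_set VG EG X \<Longrightarrow> X \<subseteq> A"
    and Z: "total_mv_set (cart_V VG VH) (cart_E EG EH) Z"
  shows "card Z \<le> card A * mu_t VH EH"
proof -
  let ?F = "\<lambda>g. {h. (g, h) \<in> Z}"
  have "finite VG" "finite VH" using cG cH unfolding connected_graph_def graph_def by auto
  then have "finite A" using \<open>A \<subseteq> VG\<close> finite_subset by blast
  have ZV: "Z \<subseteq> VG \<times> VH" using Z unfolding total_mv_set_def cart_V_def by simp
  then have "?F g \<subseteq> VH" for g by auto
  then have fin_F: "finite (?F g)" for g using \<open>finite VH\<close> finite_subset by metis
  have "Z \<subseteq> Sigma A ?F"
  proof
    fix v assume "v \<in> Z"
    then obtain g h where v: "v = (g, h)" and "h \<in> VH" using ZV by auto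
    have "{g. (g, h) \<in> Z} \<subseteq> A"
      using A total_mv_set_cart_G_fibre[OF cG cH Z \<open>h \<in> VH\<close>] .
    then show "v \<in> Sigma A ?F" using \<open>v \<in> Z\<close> v by auto
  qed
  then have "card Z \<le> card (Sigma A ?F)"
    using \<open>finite A\<close> fin_F by (intro card_mono) auto
  also have "\<dots> = (\<Sum>g\<in>A. card (?F g))"
    using \<open>finite A\<close> fin_F by (intro card_SigmaI) auto
  also have "\<dots> \<le> (\<Sum>g\<in>A. mu_t VH EH)"
  proof (rule sum_mono)
    fix g assume "g \<in> A"
    then have "g \<in> VG" using \<open>A \<subseteq> VG\<close> by blast
    then show "card (?F g) \<le> mu_t VH EH"
      using card_le_mu_t[OF \<open>finite VH\<close> total_mv_set_cart_H_fibre[OF cG cH Z]] by blast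
  qed
  finally show ?thesis by simp
qed

lemma shortest_path_split_non_simplicial:
  assumes "graph V E" and ind: "independent_set V E (simplicial_set V E)"
    and sp: "shortest_path V E x y P" and "x \<noteq> y"
  obtains P1 u P2 where "P = P1 @ u # P2"
    and "simplicial_set V E \<inter> (set (tl P1) \<union> {u} \<union> set (butlast P2)) = {}"
proof -
  let ?S = "simplicial_set V E"
  have not_S: "internal P \<inter> ?S = {}"
    using internal_shortest_path_not_simplicial[OF \<open>graph V E\<close> sp] unfolding simplicial_set_def by blast
  have wP: "walk V E P" and "hd P = x" "last P = y" using sp unfolding shortest_path_def by auto
  then obtain c rest where P: "P = x # c # rest"
    using walk_not_Nil[OF wP] \<open>x \<noteq> y\<close> by (cases P; cases "tl P") auto
  show thesis
  proof (cases rest)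
    case Nil
    then have "E x y" using wP P \<open>last P = y\<close> by simp
    then have "x \<notin> ?S \<or> y \<notin> ?S" using ind unfolding independent_set_def by blast
    then show thesis
      using that[of "[]" x "[y]"] that[of "[x]" y "[]"] P Nil \<open>last P = y\<close> by auto
  next
    case (Cons d rest')
    then have "internal P = insert c (set (butlast rest))"
      using P unfolding internal_def by simp
    then show thesis using that[of "[x]" c rest] not_S P by auto
  qed
qed

lemma total_mv_set_cart_simplicial_times:
  assumes cG: "connected_graph VG EG" and cH: "connected_graph VH EH"
    and ind: "independent_set VG EG (simplicial_set VG EG)" and Y: "total_mv_set VH EH Y"
  shows "total_mv_set (cart_V VG VH) (cart_E EG EH) (simplicial_set VG EG \<times> Y)"
  unfolding total_mv_set_def
proof (intro conjI ballI)
  let ?S = "simplicial_set VG EG"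
  show "?S \<times> Y \<subseteq> cart_V VG VH"
    using Y unfolding total_mv_set_def simplicial_set_def simplicial_def cart_V_def by auto
  fix v w assume "v \<in> cart_V VG VH" "w \<in> cart_V VG VH"
  then obtain g h g' h' where vw: "v = (g, h)" "w = (g', h')"
    and "g \<in> VG" "g' \<in> VG" "h \<in> VH" "h' \<in> VH" unfolding cart_V_def by auto
  then obtain Q where Q: "shortest_path VH EH h h' Q" and "internal Q \<inter> Y = {}"
    using Y unfolding total_mv_set_def X_visible_def by blast
  show "X_visible (cart_V VG VH) (cart_E EG EH) (?S \<times> Y) v w"
  proof (cases "g = g'")
    case True
    have "shortest_path VG EG g g' ([] @ g # [])"
      using \<open>g \<in> VG\<close> gdist_self True unfolding shortest_path_def by simp
    then have "shortest_path (cart_V VG VH) (cart_E EG EH) v w (cart_route [] g [] Q)"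
      using shortest_path_cart_route[OF cG cH _ Q] vw by simp
    moreover have "internal (cart_route [] g [] Q) = Pair g ` internal Q"
      by (simp add: cart_route_def internal_map)
    then have "internal (cart_route [] g [] Q) \<inter> (?S \<times> Y) = {}"
      using \<open>internal Q \<inter> Y = {}\<close> by auto
    ultimately show ?thesis unfolding X_visible_def by blast
  next
    case False
    have "graph VG EG" using cG unfolding connected_graph_def by simp
    obtain P where P: "shortest_path VG EG g g' P"
      using connected_graph_shortest_path_exists[OF cG \<open>g \<in> VG\<close> \<open>g' \<in> VG\<close>] .
    obtain P1 u P2 where "P = P1 @ u # P2"
      and not_S: "?S \<inter> (set (tl P1) \<union> {u} \<union> set (butlast P2)) = {}"
      using shortest_path_split_non_simplicial[OF \<open>graph VG EG\<close> ind P False] .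
    have "shortest_path (cart_V VG VH) (cart_E EG EH) v w (cart_route P1 u P2 Q)"
      using shortest_path_cart_route[OF cG cH _ Q] P \<open>P = P1 @ u # P2\<close> vw by simp
    moreover have "fst ` internal (cart_route P1 u P2 Q) \<inter> ?S = {}"
      using internal_cart_route[of P1 u P2 Q] not_S by blast
    then have "internal (cart_route P1 u P2 Q) \<inter> (?S \<times> Y) = {}" by force
    ultimately show ?thesis unfolding X_visible_def by blast
  qed
qed

theorem theorem5p6:
  fixes VG :: "'a set" and EG :: "'a \<Rightarrow> 'a \<Rightarrow> bool"
    and VH :: "'b set" and EH :: "'b \<Rightarrow> 'b \<Rightarrow> bool"
  assumes "connected_graph VG EG" and "connected_graph VH EH"
    and "independent_set VG EG (simplicial_set VG EG)"
    and "mu_t VG EG = card (simplicial_set VG EG)"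
  shows "mu_t (cart_V VG VH) (cart_E EG EH) = mu_t VG EG * mu_t VH EH"
proof -
  let ?S = "simplicial_set VG EG" and ?V = "cart_V VG VH" and ?E = "cart_E EG EH"
  have "finite VG" "finite VH" using assms(1,2) unfolding connected_graph_def graph_def by auto
  then have "finite ?V" unfolding cart_V_def by simp
  obtain Y where Y: "total_mv_set VH EH Y" "card Y = mu_t VH EH"
    using mu_t_attained[OF \<open>finite VH\<close> total_mv_set_empty[OF assms(2)]] .
  have SY: "total_mv_set ?V ?E (?S \<times> Y)"
    using total_mv_set_cart_simplicial_times[OF assms(1-3) Y(1)] .
  obtain Z where Z: "total_mv_set ?V ?E Z" "card Z = mu_t ?V ?E"
    using mu_t_attained[OF \<open>finite ?V\<close> SY] .
  have "?S \<subseteq> VG" unfolding simplicial_set_def simplicial_def by blast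
  moreover have "X \<subseteq> ?S" if "total_mv_set VG EG X" for X
    using total_mv_set_subset_simplicial[OF assms(1) that assms(4)] .
  ultimately have "card Z \<le> card ?S * mu_t VH EH"
    using card_total_mv_set_cart_le[OF assms(1,2) _ _ Z(1)] by blast
  moreover have "card (?S \<times> Y) \<le> mu_t ?V ?E" using card_le_mu_t[OF \<open>finite ?V\<close> SY] .
  ultimately show ?thesis using Z(2) Y(2) assms(4) by (simp add: card_cartesian_product)
qed

end
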